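(* For every positive integer $n$ there exist a non degenerate circuit $\mathcal{C}\subset\mathbb{Z}^n$ and a generic real polynomial system supported on $\mathcal{C}$ having exactly $n+1$ positive solutions.
   Context: A circuit is a set $\mathcal{C}\subset\mathbb{Z}^n$ of $n+2$ points whose affine span is $\mathbb{R}^n$; it is non degenerate if every proper subset of $\mathcal{C}$ is affinely independent. A real polynomial system supported on $\mathcal{C}$ is a system of $n$ Laurent polynomial equations $F_1=\dots=F_n=0$ in $x=(x_1,\dots,x_n)$ with real coefficients, where each $F_j$ has support $\mathcal{C}$ (the set of exponent vectors of its monomials with nonzero coefficient). Such a system is generic if its number of solutions in $(\mathbb{C}^* )^n$ equals the normalized volume $v(\mathcal{C})$ of the convex hull of $\mathcal{C}$ (normalized so that $[0,1]^n$ has volume $n!$). Positive solutions are solutions in $(\mathbb{R}_{>0})^n$. *)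

theory Defs
  imports "HOL-Analysis.Analysis"
begin

text \<open>Integer points of Z^n are modelled as int^'n, the dimension n being CARD('n).\<close>

definition real_pt :: "int ^ 'n \<Rightarrow> real ^ 'n" where
  "real_pt a = (\<chi> i. real_of_int (a $ i))"

definition is_circuit :: "(int ^ 'n::finite) set \<Rightarrow> bool" where
  "is_circuit C \<longleftrightarrow> finite C \<and> card C = CARD('n) + 2 \<and>
      affine hull (real_pt ` C) = UNIV"

definition nondegenerate_circuit :: "(int ^ 'n::finite) set \<Rightarrow> bool" where
  "nondegenerate_circuit C \<longleftrightarrow> is_circuit C \<and>
      (\<forall>S. S \<subset> real_pt ` C \<longrightarrow> \<not> affine_dependent S)"

definition normalized_volume :: "(int ^ 'n::finite) set \<Rightarrow> real" where
  "normalized_volume C = fact CARD('n) * measure lborel (convex hull (real_pt ` C))"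

definition laurent_monomial :: "'a::{real_field} ^ 'n::finite \<Rightarrow> int ^ 'n \<Rightarrow> 'a" where
  "laurent_monomial x a = (\<Prod>i\<in>UNIV. (x $ i) powi (a $ i))"

definition laurent_eval ::
  "('n::finite \<Rightarrow> int ^ 'n \<Rightarrow> real) \<Rightarrow> (int ^ 'n) set \<Rightarrow> 'n \<Rightarrow> 'a::real_field ^ 'n \<Rightarrow> 'a" where
  "laurent_eval c C j x = (\<Sum>a\<in>C. of_real (c j a) * laurent_monomial x a)"

text \<open>A real system supported on C: every F_j has support exactly C.\<close>
definition supported_on :: "('n::finite \<Rightarrow> int ^ 'n \<Rightarrow> real) \<Rightarrow> (int ^ 'n) set \<Rightarrow> bool" where
  "supported_on c C \<longleftrightarrow> (\<forall>j a. a \<in> C \<longrightarrow> c j a \<noteq> 0)"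

definition complex_torus_solutions ::
  "('n::finite \<Rightarrow> int ^ 'n \<Rightarrow> real) \<Rightarrow> (int ^ 'n) set \<Rightarrow> (complex ^ 'n) set" where
  "complex_torus_solutions c C =
     {x. (\<forall>i. x $ i \<noteq> 0) \<and> (\<forall>j. laurent_eval c C j x = 0)}"

definition positive_solutions ::
  "('n::finite \<Rightarrow> int ^ 'n \<Rightarrow> real) \<Rightarrow> (int ^ 'n) set \<Rightarrow> (real ^ 'n) set" where
  "positive_solutions c C =
     {x. (\<forall>i. x $ i > 0) \<and> (\<forall>j. laurent_eval c C j x = 0)}"

definition generic_system :: "('n::finite \<Rightarrow> int ^ 'n \<Rightarrow> real) \<Rightarrow> (int ^ 'n) set \<Rightarrow> bool" where
  "generic_system c C \<longleftrightarrow> finite (complex_torus_solutions c C) \<and>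
     real (card (complex_torus_solutions c C)) = normalized_volume C"

end

theory Submission
  imports Defs
begin

(*
  The circuit is C = {0, e_1, ..., e_n, q} with q_i = 2 or -2 alternating along an enumeration
  of the coordinates.  Its affine relations are the multiples of the one with coefficient 1 at q,
  -q_i at e_i and (sum of the q_i) - 1 = -1 or 1 at 0.  The simplices obtained by deleting one
  vertex on the positive side of this relation triangulate conv C, and their normalized volumes are
  1 (for q) and |q_i| = 2 (for e_i); summing gives v(C) = n + 1.

  The system is F = (I + J) G with the trinomials G_j = x_j - 1 - c_j x^q; adding the sum of all G_k
  makes every coefficient nonzero without changing the zero set.  On G = 0 each x_j equals
  1 + c_j t with t = x^q, so the system reduces to the univariate eliminant
  t * prod_{k odd} (1 + c_k t)^2 - prod_{k even} (1 + c_k t)^2 of degree at most n + 1.  With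
  c_k = B^-(4k+2) and B = 2^(n+1), logarithmic estimates show that the eliminant alternates in
  sign at 0, B^2, B^6, ..., B^(4n+2).  It therefore has n + 1 positive roots and no other complex
  roots, so the system has exactly n + 1 solutions in the complex torus, all of them positive.
*)

section \<open>Volumes of simplices in coordinate space\<close>

text \<open>The library computes volumes of simplices in \<open>real^'m\<close> only for well-ordered index types \<open>'m\<close>;
  \<open>'a wo\<close> is a copy of a finite type carrying such an order.\<close>

typedef 'a wo = "UNIV :: 'a set" morphisms rep_wo abs_wo by auto

instance wo :: (finite) finite
proof
  have "(UNIV :: 'a wo set) = range abs_wo"
    by (metis rep_wo_inverse surj_def)
  then show "finite (UNIV :: 'a wo set)"
    by (metis finite_imageI finite)
qed

instantiation wo :: (finite) wellorder
begin
definition "x \<le> y \<longleftrightarrow> to_nat (rep_wo x) \<le> to_nat (rep_wo y)"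
definition "x < y \<longleftrightarrow> to_nat (rep_wo x) < to_nat (rep_wo y)"
instance
proof
  fix P :: "'a wo \<Rightarrow> bool" and a :: "'a wo"
  assume step: "\<And>x. (\<And>y. y < x \<Longrightarrow> P y) \<Longrightarrow> P x"
  have "to_nat (rep_wo x) = m \<Longrightarrow> P x" for m x
    by (induction m arbitrary: x rule: less_induct) (auto intro: step simp: less_wo_def)
  then show "P a" by blast
qed (auto simp: less_eq_wo_def less_wo_def rep_wo_inject)
end

lemma card_wo: "CARD('a::finite wo) = CARD('a)"
  using type_definition.card[OF type_definition_wo] by simp

lemma Basis_real_cart: "(Basis :: (real^'n) set) = range (\<lambda>i. axis i 1)"
  by (auto simp: Basis_vec_def)

lemma Basis_minus_axis_cart: "(Basis :: (real^'n) set) - {axis i 1} = (\<lambda>j. axis j 1) ` (- {i})"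
  by (auto simp: Basis_real_cart axis_eq_axis)

lemma prod_Basis_cart: "(\<Prod>b\<in>Basis. v \<bullet> b) = (\<Prod>i\<in>UNIV. (v::real^'n) $ i)"
  by (simp add: Basis_vec_def cart_eq_inner_axis axis_eq_axis prod.UNION_disjoint)

lemma borel_measurable_reindex [measurable]:
  "(\<lambda>x::real^'m::finite. \<chi> i. x $ h i) \<in> borel_measurable borel"
  by (intro borel_measurable_continuous_onI continuous_intros)

lemma lborel_distr_reindex:
  fixes h :: "'n::finite \<Rightarrow> 'm::finite"
  assumes h: "bij h"
  shows "distr lborel borel (\<lambda>x::real^'m. \<chi> i. x $ h i) = (lborel :: (real^'n) measure)"
proof (rule lborel_eqI[symmetric])
  let ?g = "inv h"
  have hg: "h (?g k) = k" and gh: "?g (h i) = i" for k i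
    using bij_is_surj[OF h] bij_is_inj[OF h] by (simp_all add: surj_f_inv_f)
  fix l u :: "real^'n"
  assume le: "\<And>b. b \<in> Basis \<Longrightarrow> l \<bullet> b \<le> u \<bullet> b"
  let ?l = "\<chi> k. l $ ?g k" and ?u = "\<chi> k. u $ ?g k"
  have "(\<lambda>x::real^'m. \<chi> i. x $ h i) -` box l u = box ?l ?u"
  proof (intro set_eqI)
    fix x :: "real^'m"
    show "x \<in> (\<lambda>x::real^'m. \<chi> i. x $ h i) -` box l u \<longleftrightarrow> x \<in> box ?l ?u"
      unfolding vimage_def mem_Collect_eq mem_box_cart vec_lambda_beta
      by (metis gh hg)
  qed
  moreover have "?l \<bullet> b \<le> ?u \<bullet> b" if b: "b \<in> Basis" for b
  proof -
    obtain k where "b = axis k 1" using b by (auto simp: Basis_real_cart)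
    moreover have "l $ ?g k \<le> u $ ?g k"
      using le[of "axis (?g k) 1"] by (simp add: Basis_real_cart inner_axis)
    ultimately show ?thesis by (simp add: inner_axis)
  qed
  ultimately have "emeasure (distr lborel borel (\<lambda>x::real^'m. \<chi> i. x $ h i)) (box l u)
      = (\<Prod>k\<in>UNIV. u $ ?g k - l $ ?g k)"
    by (simp add: emeasure_distr emeasure_lborel_box_eq prod_Basis_cart)
  also have "\<dots> = (\<Prod>i\<in>UNIV. u $ i - l $ i)"
    using prod.reindex_bij_betw[OF bij_betw_inv_into[OF h], of "\<lambda>i. u $ i - l $ i"] by simp
  finally show "emeasure (distr lborel borel (\<lambda>x::real^'m. \<chi> i. x $ h i)) (box l u)
      = (\<Prod>b\<in>Basis. (u - l) \<bullet> b)"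
    by (simp add: prod_Basis_cart)
qed simp

lemma measure_reindex_vimage:
  fixes h :: "'n::finite \<Rightarrow> 'm::finite"
  assumes "bij h" and "S \<in> sets borel"
  shows "measure lborel ((\<lambda>x::real^'m. \<chi> i. x $ h i) -` S) = measure lborel (S :: (real^'n) set)"
proof -
  have "measure lborel S = measure (distr lborel borel (\<lambda>x::real^'m. \<chi> i. x $ h i)) S"
    by (simp add: lborel_distr_reindex[OF \<open>bij h\<close>])
  then show ?thesis
    using assms(2) by (simp add: measure_distr)
qed

lemma content_simplex_replace_axis_wellorder:
  fixes q :: "real^'m::{finite,wellorder}"
  assumes "q $ i \<noteq> 0"
  shows "measure lborel (convex hull (insert 0 (insert q (Basis - {axis i 1}))))
    = \<bar>q $ i\<bar> / fact CARD('m)"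
proof -
  define f where "f j = (if j = i then q else axis j 1)" for j
  have q0: "q \<noteq> 0" using assms by auto
  have inj: "inj f"
    using assms by (auto intro!: injI simp: f_def axis_eq_axis split: if_splits) (auto simp: axis_def)
  have range_f: "range f = insert q (Basis - {axis i 1})"
    by (auto simp: f_def Basis_real_cart axis_eq_axis image_iff)
  have "0 \<notin> range f"
    using q0 by (auto simp: f_def axis_eq_axis)
  then have "bij_betw f UNIV (insert 0 (range f) - {0})"
    and "card (insert 0 (range f)) = Suc CARD('m)"
    using inj by (auto simp: bij_betw_def card_image)
  then have "measure lborel (convex hull (insert 0 (range f))) = \<bar>det (\<chi> r c. f c $ r - 0 $ r)\<bar> / fact CARD('m)"
    by (intro content_simplex) auto
  moreover have "det (\<chi> r c. f c $ r - 0 $ r) = q $ i"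
  proof -
    have row_mat1: "row j (mat 1) = axis j (1::real)" for j :: 'm
      by (simp add: row_def mat_def axis_def vec_eq_iff)
    have "transpose (\<chi> r c. f c $ r - 0 $ r)
        = (\<chi> k. if k = i then (\<Sum>j\<in>UNIV. q $ j *s row j (mat 1)) else row k (mat 1))"
      by (simp add: transpose_def row_mat1 basis_expansion f_def vec_eq_iff)
    then have "det (transpose (\<chi> r c. f c $ r - 0 $ r)) = q $ i"
      using cramer_lemma_transpose[of i q "mat 1"] by simp
    then show ?thesis by simp
  qed
  ultimately show ?thesis by (simp add: range_f)
qed

lemma content_simplex_replace_axis:
  fixes q :: "real^'n::finite"
  assumes "q $ i \<noteq> 0"
  shows "measure lborel (convex hull (insert 0 (insert q (Basis - {axis i 1}))))
    = \<bar>q $ i\<bar> / fact CARD('n)"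
proof -
  let ?S = "convex hull (insert 0 (insert q (Basis - {axis i 1})))"
  define g :: "real^'n \<Rightarrow> real^'n wo" where "g x = (\<chi> j. x $ rep_wo j)" for x
  define r :: "real^'n wo \<Rightarrow> real^'n" where "r y = (\<chi> i. y $ abs_wo i)" for y
  have bij_abs: "bij (abs_wo :: 'n \<Rightarrow> 'n wo)"
    by (metis UNIV_I abs_wo_inverse bij_betw_def inj_on_inverseI rep_wo_inverse surj_def)
  have rg: "r (g x) = x" and gr: "g (r y) = y" for x y
    by (simp_all add: r_def g_def vec_eq_iff abs_wo_inverse rep_wo_inverse)
  have vimage_eq: "r -` ?S = g ` ?S"
    using rg gr by (auto simp: image_iff) (metis gr)
  have g_axis: "g (axis j 1) = axis (abs_wo j) 1" for j
    by (auto simp: g_def axis_def vec_eq_iff) (metis abs_wo_inverse UNIV_I rep_wo_inverse)+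
  have "abs_wo ` (- {i}) = - {abs_wo i}"
    using bij_image_Compl_eq[OF bij_abs] by simp
  then have "g ` (Basis - {axis i 1}) = Basis - {axis (abs_wo i) 1}"
    by (simp add: Basis_minus_axis_cart image_image g_axis flip: image_image[of "\<lambda>k. axis k 1" abs_wo])
  moreover have "linear g"
    by (auto intro!: linearI simp: g_def vec_eq_iff)
  ultimately have "g ` ?S = convex hull (insert 0 (insert (g q) (Basis - {axis (abs_wo i) 1})))"
    by (simp add: convex_hull_linear_image linear_0)
  moreover have "g q $ abs_wo i = q $ i"
    by (simp add: g_def abs_wo_inverse)
  ultimately have "measure lborel (g ` ?S) = \<bar>q $ i\<bar> / fact CARD('n)"
    using content_simplex_replace_axis_wellorder[of "g q" "abs_wo i"] assms by (simp add: card_wo)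
  moreover have "?S \<in> sets borel"
    by (intro borel_closed compact_imp_closed finite_imp_compact_convex_hull) simp
  ultimately show ?thesis
    using measure_reindex_vimage[OF bij_abs] vimage_eq unfolding r_def by metis
qed

section \<open>Triangulating a circuit\<close>

definition affine_relation :: "'a::real_vector set \<Rightarrow> ('a \<Rightarrow> real) \<Rightarrow> bool" where
  "affine_relation X u \<longleftrightarrow> sum u X = 0 \<and> (\<Sum>x\<in>X. u x *\<^sub>R x) = 0"

lemma mem_convex_hull_Diff_iff:
  fixes X :: "'a::real_vector set"
  assumes "finite X"
  shows "x \<in> convex hull (X - C) \<longleftrightarrow>
    (\<exists>u. (\<forall>y\<in>X. 0 \<le> u y) \<and> (\<forall>y\<in>C. u y = 0) \<and> sum u X = 1 \<and> (\<Sum>y\<in>X. u y *\<^sub>R y) = x)"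
proof -
  have sums: "sum u X = sum u (X - C)" "(\<Sum>y\<in>X. u y *\<^sub>R y) = (\<Sum>y\<in>X - C. u y *\<^sub>R y)"
    if "\<forall>y\<in>C. u y = 0" for u :: "'a \<Rightarrow> real"
    using that assms by (auto intro!: sum.mono_neutral_right)
  show ?thesis
  proof
    assume "x \<in> convex hull (X - C)"
    then obtain u where "\<forall>y\<in>X - C. 0 \<le> u y" "sum u (X - C) = 1" "(\<Sum>y\<in>X - C. u y *\<^sub>R y) = x"
      using assms by (auto simp: convex_hull_finite)
    moreover define v where "v y = (if y \<in> C then 0 else u y)" for y
    moreover have "sum v (X - C) = sum u (X - C)" "(\<Sum>y\<in>X - C. v y *\<^sub>R y) = (\<Sum>y\<in>X - C. u y *\<^sub>R y)"
      by (auto simp: v_def intro!: sum.cong)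
    ultimately show "\<exists>u. (\<forall>y\<in>X. 0 \<le> u y) \<and> (\<forall>y\<in>C. u y = 0) \<and> sum u X = 1 \<and> (\<Sum>y\<in>X. u y *\<^sub>R y) = x"
      using sums[of v] by (intro exI[of _ v]) (auto simp: v_def)
  next
    assume "\<exists>u. (\<forall>y\<in>X. 0 \<le> u y) \<and> (\<forall>y\<in>C. u y = 0) \<and> sum u X = 1 \<and> (\<Sum>y\<in>X. u y *\<^sub>R y) = x"
    then show "x \<in> convex hull (X - C)"
      using sums assms by (auto simp: convex_hull_finite)
  qed
qed

lemma mem_convex_hull_Diff_positive:
  fixes X :: "'a::real_vector set"
  assumes "finite X" and rel: "affine_relation X lam" and "\<exists>c\<in>X. lam c > 0"
    and "x \<in> convex hull X"
  obtains c where "c \<in> X" "lam c > 0" "x \<in> convex hull (X - {c})"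
proof -
  obtain u where u0: "\<forall>y\<in>X. 0 \<le> u y" and u1: "sum u X = 1" and ux: "(\<Sum>y\<in>X. u y *\<^sub>R y) = x"
    using mem_convex_hull_Diff_iff[OF \<open>finite X\<close>, of x "{}"] assms(4) by auto
  define P where "P = {c\<in>X. lam c > 0}"
  have "finite P" "P \<noteq> {}"
    using assms by (auto simp: P_def)
  \<comment> \<open>Move from u along the relation until the first coefficient vanishes.\<close>
  define t where "t = Min ((\<lambda>c. u c / lam c) ` P)"
  have "t \<in> (\<lambda>c. u c / lam c) ` P"
    unfolding t_def using \<open>finite P\<close> \<open>P \<noteq> {}\<close> by (intro Min_in) auto
  then obtain c0 where c0: "c0 \<in> P" "t = u c0 / lam c0"
    by blast
  have t_le: "t \<le> u c / lam c" if "c \<in> P" for c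
    unfolding t_def using \<open>finite P\<close> that by simp
  have "0 \<le> t"
    using c0 u0 by (auto simp: P_def)
  define v where "v y = u y - t * lam y" for y
  have "0 \<le> v y" if "y \<in> X" for y
    using t_le[of y] u0 \<open>0 \<le> t\<close> that mult_nonneg_nonpos[of t "lam y"]
    by (cases "lam y > 0") (auto simp: v_def P_def field_simps)
  moreover have "v c0 = 0"
    using c0 by (auto simp: v_def P_def)
  moreover have "sum v X = 1" "(\<Sum>y\<in>X. v y *\<^sub>R y) = x"
    using rel u1 ux by (simp_all add: affine_relation_def v_def sum_subtractf scaleR_diff_left
        flip: sum_distrib_left scaleR_sum_right scaleR_scaleR)
  ultimately have "x \<in> convex hull (X - {c0})"
    using mem_convex_hull_Diff_iff[OF \<open>finite X\<close>] by blast
  with c0 show ?thesis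
    using that by (auto simp: P_def)
qed

lemma convex_hull_eq_Union_convex_hull_Diff:
  fixes X :: "'a::real_vector set"
  assumes "finite X" and "affine_relation X lam" and "\<exists>c\<in>X. lam c > 0"
  shows "convex hull X = (\<Union>c\<in>{c\<in>X. lam c > 0}. convex hull (X - {c}))"
proof
  show "(\<Union>c\<in>{c\<in>X. lam c > 0}. convex hull (X - {c})) \<subseteq> convex hull X"
    by (auto intro: hull_mono[THEN subsetD, of "X - {_}" X])
  show "convex hull X \<subseteq> (\<Union>c\<in>{c\<in>X. lam c > 0}. convex hull (X - {c}))"
    using mem_convex_hull_Diff_positive[OF assms] by blast
qed

lemma convex_hull_Diff_Int_subset:
  fixes X :: "'a::real_vector set"
  assumes "finite X"
    and uniq: "\<And>u. affine_relation X u \<Longrightarrow> \<exists>s. \<forall>x\<in>X. u x = s * lam x"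
    and c: "c \<in> X" "lam c > 0" and c': "c' \<in> X" "lam c' > 0"
  shows "convex hull (X - {c}) \<inter> convex hull (X - {c'}) \<subseteq> convex hull (X - {c, c'})"
proof
  fix x assume "x \<in> convex hull (X - {c}) \<inter> convex hull (X - {c'})"
  then have "x \<in> convex hull (X - {c})" "x \<in> convex hull (X - {c'})"
    by auto
  then obtain u v where u: "\<forall>y\<in>X. 0 \<le> u y" "u c = 0" "sum u X = 1" "(\<Sum>y\<in>X. u y *\<^sub>R y) = x"
    and v: "\<forall>y\<in>X. 0 \<le> v y" "v c' = 0" "sum v X = 1" "(\<Sum>y\<in>X. v y *\<^sub>R y) = x"
    unfolding mem_convex_hull_Diff_iff[OF \<open>finite X\<close>] by auto
  have "affine_relation X (\<lambda>y. u y - v y)"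
    using u v by (simp add: affine_relation_def sum_subtractf scaleR_diff_left)
  then obtain s where s: "\<forall>y\<in>X. u y - v y = s * lam y"
    using uniq by blast
  have "s * lam c \<le> 0"
    using s u(2) v(1) c(1) by force
  moreover have "s * lam c' \<ge> 0"
    using s u(1) v(2) c'(1) by force
  ultimately have "s = 0"
    using c(2) c'(2) by (simp add: mult_le_0_iff zero_le_mult_iff)
  then have "u c' = 0"
    using s v(2) c'(1) by force
  then show "x \<in> convex hull (X - {c, c'})"
    using mem_convex_hull_Diff_iff[OF \<open>finite X\<close>] u by auto
qed

lemma negligible_convex_hull_card_le:
  fixes S :: "'a::euclidean_space set"
  assumes "finite S" "card S \<le> DIM('a)"
  shows "negligible (convex hull S)"
proof -
  have "aff_dim (convex hull S) < DIM('a)"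
    using aff_dim_le_card[OF assms(1)] assms(2) by (simp add: aff_dim_convex_hull)
  then obtain a b where "a \<noteq> 0" "convex hull S \<subseteq> {x. a \<bullet> x = b}"
    using aff_lowdim_subset_hyperplane by blast
  then show ?thesis
    using negligible_hyperplane negligible_subset by blast
qed

lemma measure_convex_hull_eq_sum_simplices:
  fixes X :: "'a::euclidean_space set"
  assumes "finite X" and card: "card X = DIM('a) + 2"
    and rel: "affine_relation X lam"
    and uniq: "\<And>u. affine_relation X u \<Longrightarrow> \<exists>s. \<forall>x\<in>X. u x = s * lam x"
    and pos: "\<exists>c\<in>X. lam c > 0"
  shows "measure lborel (convex hull X)
    = (\<Sum>c\<in>{c\<in>X. lam c > 0}. measure lborel (convex hull (X - {c})))"
proof -
  define P where "P = {c\<in>X. lam c > 0}"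
  have compact: "compact (convex hull (X - C))" for C
    using \<open>finite X\<close> by (intro finite_imp_compact_convex_hull) simp
  have "measure lborel (convex hull X) = measure lebesgue (\<Union>c\<in>P. convex hull (X - {c}))"
    using convex_hull_eq_Union_convex_hull_Diff[OF \<open>finite X\<close> rel pos] compact[of "{}"]
    by (simp add: P_def measure_completion borel_compact)
  also have "\<dots> = (\<Sum>c\<in>P. measure lebesgue (convex hull (X - {c})))"
  proof (rule measure_negligible_finite_Union_image)
    show "finite P"
      using \<open>finite X\<close> by (simp add: P_def)
    show "convex hull (X - {c}) \<in> lmeasurable" for c
      using compact by (rule lmeasurable_compact)
    show "pairwise (\<lambda>c c'. negligible (convex hull (X - {c}) \<inter> convex hull (X - {c'}))) P"
    proof (intro pairwiseI)
      fix c c' assume "c \<in> P" "c' \<in> P" "c \<noteq> c'"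
      then have "card (X - {c, c'}) = DIM('a)"
        using card by (simp add: P_def card_Diff_subset)
      then have "negligible (convex hull (X - {c, c'}))"
        using \<open>finite X\<close> by (intro negligible_convex_hull_card_le) auto
      then show "negligible (convex hull (X - {c}) \<inter> convex hull (X - {c'}))"
        using convex_hull_Diff_Int_subset[OF \<open>finite X\<close> uniq] \<open>c \<in> P\<close> \<open>c' \<in> P\<close>
        by (auto simp: P_def intro: negligible_subset)
    qed
  qed
  also have "\<dots> = (\<Sum>c\<in>P. measure lborel (convex hull (X - {c})))"
    using compact by (simp add: measure_completion borel_compact)
  finally show ?thesis
    by (simp add: P_def)
qed

lemma sum_positive_part_eq_half_sum_abs:
  fixes f :: "'a \<Rightarrow> real"
  assumes "finite X" "sum f X = 0"
  shows "(\<Sum>x\<in>{x\<in>X. f x > 0}. f x) = (\<Sum>x\<in>X. \<bar>f x\<bar>) / 2"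
proof -
  have "(\<Sum>x\<in>{x\<in>X. f x > 0}. f x) = (\<Sum>x\<in>X. (\<bar>f x\<bar> + f x) / 2)"
    using assms(1) by (simp add: sum.inter_filter) (rule sum.cong, auto)
  also have "\<dots> = (\<Sum>x\<in>X. \<bar>f x\<bar>) / 2"
    using assms(2) by (simp add: sum.distrib flip: sum_divide_distrib)
  finally show ?thesis .
qed

lemma measure_convex_hull_eq_half_sum_abs:
  fixes X :: "'a::euclidean_space set"
  assumes "finite X" and card: "card X = DIM('a) + 2"
    and rel: "affine_relation X lam"
    and uniq: "\<And>u. affine_relation X u \<Longrightarrow> \<exists>s. \<forall>x\<in>X. u x = s * lam x"
    and "\<exists>c\<in>X. lam c \<noteq> 0"
    and simplex: "\<And>c. c \<in> X \<Longrightarrow> lam c > 0 \<Longrightarrow> measure lborel (convex hull (X - {c})) = K * \<bar>lam c\<bar>"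
  shows "measure lborel (convex hull X) = K * (\<Sum>c\<in>X. \<bar>lam c\<bar>) / 2"
proof -
  have "sum lam X = 0"
    using rel by (simp add: affine_relation_def)
  have "\<exists>c\<in>X. lam c > 0"
  proof (rule ccontr)
    assume "\<not> (\<exists>c\<in>X. lam c > 0)"
    then have "sum (\<lambda>c. - lam c) X = 0 \<longleftrightarrow> (\<forall>c\<in>X. - lam c = 0)"
      using \<open>finite X\<close> by (intro sum_nonneg_eq_0_iff) auto
    then show False
      using \<open>sum lam X = 0\<close> assms(5) by (simp add: sum_negf)
  qed
  then have "measure lborel (convex hull X) = (\<Sum>c\<in>{c\<in>X. lam c > 0}. K * lam c)"
    using measure_convex_hull_eq_sum_simplices[OF \<open>finite X\<close> card rel uniq] simplex
    by (auto intro!: sum.cong)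
  also have "\<dots> = K * (\<Sum>c\<in>{c\<in>X. lam c > 0}. lam c)"
    by (simp add: sum_distrib_left)
  also have "\<dots> = K * (\<Sum>c\<in>X. \<bar>lam c\<bar>) / 2"
    using sum_positive_part_eq_half_sum_abs[OF \<open>finite X\<close> \<open>sum lam X = 0\<close>] by simp
  finally show ?thesis .
qed

lemma affine_relation_scale:
  "affine_relation X u \<Longrightarrow> affine_relation X (\<lambda>x. c * u x)"
  by (simp add: affine_relation_def flip: sum_distrib_left scaleR_scaleR scaleR_sum_right)

lemma affine_independent_proper_subset:
  fixes X :: "'a::real_vector set"
  assumes "finite X"
    and uniq: "\<And>u. affine_relation X u \<Longrightarrow> \<exists>s. \<forall>x\<in>X. u x = s * lam x"
    and nonzero: "\<forall>x\<in>X. lam x \<noteq> 0" and "S \<subset> X"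
  shows "\<not> affine_dependent S"
proof
  assume "affine_dependent S"
  moreover have "finite S"
    using assms(1,4) finite_subset by auto
  ultimately obtain U where U: "sum U S = 0" "\<exists>v\<in>S. U v \<noteq> 0" "(\<Sum>v\<in>S. U v *\<^sub>R v) = 0"
    using affine_dependent_explicit_finite by blast
  \<comment> \<open>Extended by zero, U is a relation of X vanishing at a point of X - S, hence a zero multiple of lam.\<close>
  define u where "u x = (if x \<in> S then U x else 0)" for x
  have "affine_relation X u"
    using U assms(1,4)
    by (simp add: affine_relation_def u_def if_distrib[of "\<lambda>a. a *\<^sub>R _"] sum.If_cases Int_absorb1 less_imp_le
        cong: if_cong)
  then obtain s where s: "\<forall>x\<in>X. u x = s * lam x"
    using uniq by blast
  obtain c where "c \<in> X" "c \<notin> S"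
    using \<open>S \<subset> X\<close> by blast
  then have "s = 0"
    using s nonzero by (force simp: u_def)
  obtain v where "v \<in> S" "U v \<noteq> 0"
    using U(2) by blast
  moreover have "u v = 0"
    using s \<open>s = 0\<close> \<open>v \<in> S\<close> \<open>S \<subset> X\<close> by auto
  ultimately show False
    by (simp add: u_def)
qed

section \<open>The standard simplex together with an apex\<close>

lemma sum_insert_zero_insert_axes:
  fixes q :: "'a::zero_neq_one^'n::finite"
  assumes "q \<noteq> 0" "q \<notin> range (\<lambda>i. axis i 1)"
  shows "(\<Sum>x\<in>insert 0 (insert q (range (\<lambda>i. axis i 1))). f x) = f 0 + f q + (\<Sum>i\<in>UNIV. f (axis i 1))"
proof -
  have "inj (\<lambda>i::'n. axis i (1::'a))"
    by (auto intro!: injI simp: axis_eq_axis)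
  moreover have "0 \<notin> range (\<lambda>i::'n. axis i (1::'a))"
    by (auto simp: axis_eq_0_iff)
  ultimately show ?thesis
    using assms by (simp add: sum.reindex add.assoc)
qed

definition apex_circuit :: "real^'n::finite \<Rightarrow> (real^'n) set" where
  "apex_circuit q = insert 0 (insert q Basis)"

definition apex_relation :: "real^'n::finite \<Rightarrow> real^'n \<Rightarrow> real" where
  "apex_relation q x = (if x = q then 1 else if x = 0 then (\<Sum>i\<in>UNIV. q $ i) - 1 else - (q \<bullet> x))"

context
  fixes q :: "real^'n::finite"
  assumes q_nonzero: "\<forall>i. q $ i \<noteq> 0" and sum_q: "(\<Sum>i\<in>UNIV. q $ i) \<noteq> 1"
begin

lemma apex_vertex_ne_zero: "q \<noteq> 0"
  using q_nonzero by (metis zero_index)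

lemma apex_vertex_notin_Basis: "q \<notin> Basis"
proof
  assume "q \<in> Basis"
  then obtain i where "q = axis i 1"
    by (auto simp: Basis_real_cart)
  then have "(\<Sum>k\<in>UNIV. q $ k) = 1"
    by (simp add: axis_def)
  with sum_q show False ..
qed

lemma sum_apex_circuit:
  "(\<Sum>x\<in>apex_circuit q. f x) = f 0 + f q + (\<Sum>i\<in>UNIV. f (axis i 1))"
  unfolding apex_circuit_def Basis_real_cart
  using apex_vertex_ne_zero apex_vertex_notin_Basis by (intro sum_insert_zero_insert_axes) (auto simp: Basis_real_cart)

lemma card_apex_circuit: "card (apex_circuit q) = CARD('n) + 2"
  using apex_vertex_ne_zero apex_vertex_notin_Basis by (simp add: apex_circuit_def)

lemma apex_relation_axis: "apex_relation q (axis i 1) = - q $ i"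
  using apex_vertex_notin_Basis by (auto simp: apex_relation_def inner_axis axis_eq_0_iff)

lemma apex_relation_apex: "apex_relation q q = 1"
  by (simp add: apex_relation_def)

lemma apex_relation_zero: "apex_relation q 0 = (\<Sum>i\<in>UNIV. q $ i) - 1"
  using apex_vertex_ne_zero by (simp add: apex_relation_def)

lemma affine_relation_apex: "affine_relation (apex_circuit q) (apex_relation q)"
proof -
  have "(\<Sum>i\<in>UNIV. apex_relation q (axis i 1) *\<^sub>R axis i 1) = - q"
    using basis_expansion[of q] by (simp add: apex_relation_axis scalar_mult_eq_scaleR sum_negf)
  then show ?thesis
    unfolding affine_relation_def sum_apex_circuit
    by (simp add: apex_relation_axis apex_relation_apex apex_relation_zero sum_negf)
qed

lemma apex_relation_unique:
  assumes "affine_relation (apex_circuit q) u"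
  shows "\<exists>s. \<forall>x\<in>apex_circuit q. u x = s * apex_relation q x"
proof -
  have sum0: "u 0 + u q + (\<Sum>i\<in>UNIV. u (axis i 1)) = 0"
    and vec0: "u q *\<^sub>R q + (\<Sum>i\<in>UNIV. u (axis i 1) *\<^sub>R axis i 1) = 0"
    using assms by (simp_all add: affine_relation_def sum_apex_circuit)
  have axis: "u (axis k 1) = - u q * q $ k" for k
    using arg_cong[OF vec0, of "\<lambda>v. v $ k"] by (simp add: sum_component axis_def if_distrib cong: if_cong)
  then have "u 0 = u q * ((\<Sum>i\<in>UNIV. q $ i) - 1)"
    using sum0 by (simp add: sum_negf sum_distrib_left algebra_simps)
  then show ?thesis
    by (auto simp: apex_circuit_def Basis_real_cart axis apex_relation_axis apex_relation_apex
        apex_relation_zero intro!: exI[of _ "u q"])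
qed

lemma apex_relation_nonzero: "x \<in> apex_circuit q \<Longrightarrow> apex_relation q x \<noteq> 0"
  using q_nonzero sum_q
  by (auto simp: apex_circuit_def Basis_real_cart apex_relation_axis apex_relation_apex apex_relation_zero)

lemma affine_independent_proper_subset_apex_circuit:
  "S \<subset> apex_circuit q \<Longrightarrow> \<not> affine_dependent S"
  using apex_relation_unique apex_relation_nonzero
  by (intro affine_independent_proper_subset[where X="apex_circuit q" and lam="apex_relation q"])
    (auto simp: apex_circuit_def)

lemma affine_hull_apex_circuit: "affine hull (apex_circuit q) = UNIV"
proof -
  have "affine hull (apex_circuit q) = span (apex_circuit q)"
    by (rule affine_hull_span_0) (simp add: apex_circuit_def hull_inc)
  moreover have "span Basis \<subseteq> span (apex_circuit q)"
    by (rule span_mono) (auto simp: apex_circuit_def)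
  ultimately show ?thesis
    by (auto simp: span_Basis)
qed

lemma measure_simplex_opposite:
  assumes "c \<in> apex_circuit q - {0}"
  shows "measure lborel (convex hull (apex_circuit q - {c})) = \<bar>apex_relation q c\<bar> / fact CARD('n)"
proof -
  consider "c = q" | i where "c = axis i 1"
    using assms by (auto simp: apex_circuit_def Basis_real_cart)
  then show ?thesis
  proof cases
    case 1
    then have "apex_circuit q - {c} = insert 0 Basis"
      using apex_vertex_ne_zero apex_vertex_notin_Basis by (auto simp: apex_circuit_def)
    then show ?thesis
      using content_std_simplex[where 'a="real^'n"] 1 by (simp add: apex_relation_apex)
  next
    case 2
    then have "apex_circuit q - {c} = insert 0 (insert q (Basis - {axis i 1}))"
      using apex_vertex_notin_Basis by (auto simp: apex_circuit_def axis_eq_0_iff)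
    then show ?thesis
      using content_simplex_replace_axis[of q i] q_nonzero 2 by (simp add: apex_relation_axis)
  qed
qed

lemma measure_convex_hull_apex_circuit:
  "measure lborel (convex hull (apex_circuit q))
    = (1 + (\<Sum>i\<in>UNIV. \<bar>q $ i\<bar>) + \<bar>(\<Sum>i\<in>UNIV. q $ i) - 1\<bar>) / (2 * fact CARD('n))"
proof -
  define X where "X = apex_circuit q"
  \<comment> \<open>Orient the relation to be negative at 0: only the simplices opposite q and the e_i have known volumes.\<close>
  define \<sigma> where "\<sigma> = - sgn ((\<Sum>i\<in>UNIV. q $ i) - 1)"
  define lam where "lam x = \<sigma> * apex_relation q x" for x
  have "\<sigma> * \<sigma> = 1" "\<bar>\<sigma>\<bar> = 1"
    using sum_q by (auto simp: \<sigma>_def sgn_if)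
  then have abs_lam: "\<bar>lam x\<bar> = \<bar>apex_relation q x\<bar>" for x
    by (simp add: lam_def abs_mult)
  have rel: "affine_relation X lam"
    unfolding X_def lam_def by (rule affine_relation_scale[OF affine_relation_apex])
  have uniq: "\<exists>s. \<forall>x\<in>X. u x = s * lam x" if u: "affine_relation X u" for u
  proof -
    obtain s where "\<forall>x\<in>X. u x = s * apex_relation q x"
      using apex_relation_unique u unfolding X_def by blast
    then show ?thesis
      using \<open>\<sigma> * \<sigma> = 1\<close> by (intro exI[of _ "s * \<sigma>"]) (simp add: lam_def)
  qed
  have "lam 0 < 0"
    using sum_q by (auto simp: lam_def \<sigma>_def apex_relation_zero sgn_if)
  have "measure lborel (convex hull (X - {c})) = 1 / fact CARD('n) * \<bar>lam c\<bar>"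
    if "c \<in> X" "lam c > 0" for c
  proof -
    have "c \<noteq> 0"
      using that \<open>lam 0 < 0\<close> by auto
    then show ?thesis
      using that measure_simplex_opposite[of c] by (simp add: X_def abs_lam)
  qed
  moreover have "finite X" "card X = DIM(real^'n) + 2" "\<exists>c\<in>X. lam c \<noteq> 0"
    using \<open>lam 0 < 0\<close> by (auto simp: X_def card_apex_circuit) (auto simp: apex_circuit_def)
  ultimately have "measure lborel (convex hull X) = 1 / fact CARD('n) * (\<Sum>c\<in>X. \<bar>lam c\<bar>) / 2"
    using measure_convex_hull_eq_half_sum_abs[OF _ _ rel uniq] by blast
  then show ?thesis
    by (simp add: X_def abs_lam sum_apex_circuit apex_relation_axis apex_relation_apex apex_relation_zero
        field_simps)
qed

end

lemma abs_ln_one_plus_minus_pos_part_le: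
  fixes y :: real
  assumes "y > 0"
  shows "\<bar>ln (1 + y) - max 0 (ln y)\<bar> \<le> ln 2"
proof (cases "y \<le> 1")
  case True
  then have "0 \<le> ln (1 + y)" "ln (1 + y) \<le> ln 2" "ln y \<le> 0"
    using assms by simp_all
  then show ?thesis by simp
next
  case False
  then have "ln y \<le> ln (1 + y)" "ln (1 + y) \<le> ln (2 * y)" "0 \<le> ln y"
    using assms by simp_all
  moreover have "ln (2 * y) = ln 2 + ln y"
    using assms by (simp add: ln_mult)
  ultimately show ?thesis by simp
qed

lemma sum_neg_one_power_lessThan:
  "(\<Sum>k<j. (-1::real) ^ k) = (1 - (-1) ^ j) / 2"
  by (induction j) (simp_all add: field_simps)

lemma alternating_weighted_sum:
  "real (2 * j + 1) - 4 * (\<Sum>k<j. (-1) ^ k * (real j - real k)) = (-1) ^ j"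
proof (induction j)
  case (Suc j)
  have "(\<Sum>k<Suc j. (-1) ^ k * (real (Suc j) - real k))
      = (\<Sum>k<Suc j. (-1) ^ k * (real j - real k) + (-1::real) ^ k)"
    by (intro sum.cong) (simp_all add: algebra_simps)
  also have "\<dots> = (\<Sum>k<j. (-1) ^ k * (real j - real k)) + (\<Sum>k<Suc j. (-1::real) ^ k)"
    by (simp add: sum.distrib)
  finally show ?case
    using Suc by (simp add: sum_neg_one_power_lessThan algebra_simps) (simp add: field_simps)
qed simp

lemma zeros_from_sign_changes:
  fixes f :: "real \<Rightarrow> real" and a :: "nat \<Rightarrow> real"
  assumes "continuous_on UNIV f" "strict_mono a"
    and sign_change: "\<And>j. j < m \<Longrightarrow> f (a j) * f (a (Suc j)) < 0"
  obtains R where "finite R" "card R = m" "\<And>x. x \<in> R \<Longrightarrow> a 0 < x \<and> f x = 0"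
proof -
  have "\<exists>r. a j < r \<and> r < a (Suc j) \<and> f r = 0" if "j < m" for j
  proof -
    have "a j < a (Suc j)"
      using \<open>strict_mono a\<close> by (simp add: strict_mono_Suc_iff)
    moreover have "f (a j) < 0 \<and> 0 < f (a (Suc j)) \<or> f (a (Suc j)) < 0 \<and> 0 < f (a j)"
      using sign_change[OF that] by (auto simp: mult_less_0_iff)
    ultimately obtain r where "a j \<le> r" "r \<le> a (Suc j)" "f r = 0"
      using IVT'[of f "a j" 0 "a (Suc j)"] IVT2'[of f "a (Suc j)" 0 "a j"]
        continuous_on_subset[OF assms(1)] by (smt (verit) subset_UNIV)
    moreover have "r \<noteq> a j" "r \<noteq> a (Suc j)"
      using sign_change[OF that] \<open>f r = 0\<close> by auto
    ultimately have "a j < r" "r < a (Suc j)" "f r = 0"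
      by simp_all
    then show ?thesis by blast
  qed
  then obtain r where r: "\<And>j. j < m \<Longrightarrow> a j < r j \<and> r j < a (Suc j) \<and> f (r j) = 0"
    by metis
  have "r i < r j" if "i < j" "j < m" for i j
  proof -
    have "a (Suc i) \<le> a j"
      using \<open>strict_mono a\<close> that by (simp add: strict_mono_less_eq)
    then show ?thesis
      using r[of i] r[of j] that by linarith
  qed
  then have "inj_on r {..<m}"
    by (metis inj_onI lessThan_iff linorder_neqE_nat order_less_irrefl)
  moreover have "a 0 \<le> a j" for j
    using \<open>strict_mono a\<close> by (simp add: strict_mono_less_eq)
  ultimately show ?thesis
    using r by (intro that[of "r ` {..<m}"]) (auto simp: card_image intro: order.strict_trans1)
qed

lemma sum_if_even_lessThan:
  "(\<Sum>k<m. if even k then a else b) = of_nat ((m + 1) div 2) * a + of_nat (m div 2) * (b :: 'a::comm_semiring_1)"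
proof (induction m)
  case (Suc m)
  then show ?case
    by (cases "even m") (simp_all add: algebra_simps)
qed simp

lemma sum_lessThan_pos_part_diff:
  assumes "j \<le> m"
  shows "(\<Sum>k<m. f k * max 0 (real j - real k)) = (\<Sum>k<j. f k * (real j - real k))"
proof -
  have "(\<Sum>k<m. f k * max 0 (real j - real k)) = (\<Sum>k<j. f k * max 0 (real j - real k))"
    using assms by (intro sum.mono_neutral_right) auto
  then show ?thesis
    by simp
qed

lemma degree_prod_le_sum:
  fixes p :: "nat \<Rightarrow> 'a::comm_semiring_1 poly"
  assumes "\<And>k. k < m \<Longrightarrow> degree (p k) \<le> d k"
  shows "degree (\<Prod>k<m. p k) \<le> (\<Sum>k<m. d k)"
proof -
  have "degree (\<Prod>k<m. p k) \<le> (\<Sum>k<m. degree (p k))"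
    using degree_prod_sum_le[of "{..<m}" p] by (simp add: o_def)
  also have "\<dots> \<le> (\<Sum>k<m. d k)"
    using assms by (intro sum_mono) simp
  finally show ?thesis .
qed

lemma all_add_sum_eq_0_iff:
  fixes g :: "'n::finite \<Rightarrow> 'a::real_field"
  shows "(\<forall>j. g j + (\<Sum>k\<in>UNIV. g k) = 0) \<longleftrightarrow> (\<forall>j. g j = 0)"
proof
  assume "\<forall>j. g j + (\<Sum>k\<in>UNIV. g k) = 0"
  moreover define S where "S = (\<Sum>k\<in>UNIV. g k)"
  ultimately have g: "g j = - S" for j
    by (simp add: eq_neg_iff_add_eq_0)
  have "S = (\<Sum>k\<in>UNIV. g k)"
    by (rule S_def)
  also have "\<dots> = (\<Sum>k\<in>(UNIV::'n set). - S)"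
    using g by (intro sum.cong) auto
  finally have "S = - (of_nat CARD('n) * S)"
    by simp
  then have "(1 + of_nat CARD('n)) * S = 0"
    by (simp only: eq_neg_iff_add_eq_0 distrib_right mult_1)
  moreover have "(1 + of_nat CARD('n) :: 'a) \<noteq> 0"
    by (metis of_nat_Suc of_nat_eq_0_iff nat.distinct(1))
  ultimately show "\<forall>j. g j = 0"
    using g by simp
qed simp

section \<open>The construction\<close>

locale coordinate_enumeration =
  fixes idx :: "'n::finite \<Rightarrow> nat"
  assumes bij_idx: "bij_betw idx UNIV {..<CARD('n)}"
begin

lemma sum_idx: "(\<Sum>i\<in>UNIV. g (idx i)) = (\<Sum>k<CARD('n). g k)"
  by (rule sum.reindex_bij_betw[OF bij_idx])

lemma prod_idx: "(\<Prod>i\<in>UNIV. g (idx i)) = (\<Prod>k<CARD('n). g k)"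
  by (rule prod.reindex_bij_betw[OF bij_idx])

lemma ex_idx_eq: "k < CARD('n) \<Longrightarrow> \<exists>i. idx i = k"
  using bij_idx by (metis bij_betw_def lessThan_iff rangeE)

definition apex :: "int^'n" where
  "apex = (\<chi> i. if even (idx i) then 2 else -2)"

definition circuit :: "(int^'n) set" where
  "circuit = insert 0 (insert apex (range (\<lambda>i. axis i 1)))"

lemma apex_ne_axis: "apex \<noteq> axis i 1"
  by (auto simp: apex_def vec_eq_iff axis_def intro!: exI[of _ i])

lemma apex_ne_zero: "apex \<noteq> 0"
  using apex_ne_axis by (auto simp: apex_def vec_eq_iff)

lemma sum_circuit: "(\<Sum>a\<in>circuit. f a) = f 0 + f apex + (\<Sum>i\<in>UNIV. f (axis i 1))"
  unfolding circuit_def using apex_ne_zero apex_ne_axis by (intro sum_insert_zero_insert_axes) auto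

lemma real_pt_apex: "real_pt apex $ i = (if even (idx i) then 2 else -2)"
  by (simp add: real_pt_def apex_def)

lemma real_pt_circuit: "real_pt ` circuit = apex_circuit (real_pt apex)"
proof -
  have "real_pt (axis i 1) = axis i 1" for i :: 'n
    by (simp add: real_pt_def vec_eq_iff axis_def)
  moreover have "real_pt 0 = (0 :: real^'n)"
    by (simp add: real_pt_def vec_eq_iff)
  ultimately show ?thesis
    by (simp add: circuit_def apex_circuit_def Basis_real_cart image_image)
qed

lemma sum_real_pt_apex: "(\<Sum>i\<in>UNIV. real_pt apex $ i) = (if even CARD('n) then 0 else 2)"
  using sum_if_even_lessThan[where m="CARD('n)" and a="2::real" and b="-2"]
    sum_idx[of "\<lambda>k. if even k then 2 else -2::real"]
  by (simp add: real_pt_apex)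

lemma real_pt_apex_conditions:
  "\<forall>i. real_pt apex $ i \<noteq> 0" "(\<Sum>i\<in>UNIV. real_pt apex $ i) \<noteq> 1"
  by (simp add: real_pt_apex) (simp add: sum_real_pt_apex del: real_pt_apex)

lemma card_circuit: "card circuit = CARD('n) + 2"
proof -
  have "inj (real_pt :: int^'n \<Rightarrow> real^'n)"
    by (auto intro!: injI simp: real_pt_def vec_eq_iff)
  then have "card circuit = card (real_pt ` circuit)"
    by (simp add: card_image inj_on_subset)
  then show ?thesis
    using card_apex_circuit[OF real_pt_apex_conditions] by (simp add: real_pt_circuit)
qed

lemma nondegenerate_circuit_circuit: "nondegenerate_circuit circuit"
proof -
  have "finite circuit"
    by (simp add: circuit_def)
  then show ?thesis
    unfolding nondegenerate_circuit_def is_circuit_def real_pt_circuit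
    using card_circuit affine_hull_apex_circuit[OF real_pt_apex_conditions]
      affine_independent_proper_subset_apex_circuit[OF real_pt_apex_conditions]
    by blast
qed

lemma normalized_volume_circuit: "normalized_volume circuit = CARD('n) + 1"
proof -
  have "\<bar>real_pt apex $ i\<bar> = 2" for i
    by (simp add: real_pt_apex)
  then have "(\<Sum>i\<in>UNIV. \<bar>real_pt apex $ i\<bar>) = 2 * CARD('n)"
    by simp
  then show ?thesis
    using real_pt_apex_conditions
    by (simp add: normalized_volume_def real_pt_circuit measure_convex_hull_apex_circuit
        sum_real_pt_apex)
qed

definition base :: real where
  "base = 2 ^ (CARD('n) + 1)"

definition coef :: "nat \<Rightarrow> real" where
  "coef k = 1 / base ^ (4 * k + 2)"

lemma base_gt_1: "base > 1"
  unfolding base_def by (rule one_less_power) simp_all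

lemma coef_pos: "coef k > 0"
  using base_gt_1 by (simp add: coef_def)

definition trinomial_coeff :: "'n \<Rightarrow> int^'n \<Rightarrow> real" where
  "trinomial_coeff j a =
    (if a = axis j 1 then 1 else 0) - (if a = 0 then 1 else 0) - (if a = apex then coef (idx j) else 0)"

definition system_coeff :: "'n \<Rightarrow> int^'n \<Rightarrow> real" where
  "system_coeff j a = trinomial_coeff j a + (\<Sum>k\<in>UNIV. trinomial_coeff k a)"

lemma trinomial_coeff_zero: "trinomial_coeff j 0 = -1"
  using apex_ne_zero by (simp add: trinomial_coeff_def axis_eq_0_iff)

lemma trinomial_coeff_apex: "trinomial_coeff j apex = - coef (idx j)"
  using apex_ne_zero apex_ne_axis by (simp add: trinomial_coeff_def)

lemma trinomial_coeff_axis: "trinomial_coeff j (axis i 1) = (if i = j then 1 else 0)"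
  using apex_ne_axis[of i] by (simp add: trinomial_coeff_def axis_eq_axis axis_eq_0_iff)

lemma supported_on_system_coeff: "supported_on system_coeff circuit"
  unfolding supported_on_def
proof (intro allI impI)
  fix j a assume "a \<in> circuit"
  then consider "a = 0" | "a = apex" | i where "a = axis i 1"
    by (auto simp: circuit_def)
  then show "system_coeff j a \<noteq> 0"
  proof cases
    case 1
    then show ?thesis
      by (simp add: system_coeff_def trinomial_coeff_zero)
  next
    case 2
    have "0 < coef (idx j)" "0 < (\<Sum>k\<in>UNIV. coef (idx k))"
      using coef_pos by (simp_all add: sum_pos)
    then show ?thesis
      using 2 by (simp add: system_coeff_def trinomial_coeff_apex sum_negf)
  next
    case 3
    then show ?thesis
      by (simp add: system_coeff_def trinomial_coeff_axis)
  qed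
qed

definition trinomial :: "'n \<Rightarrow> 'a::real_field^'n \<Rightarrow> 'a" where
  "trinomial j x = x $ j - 1 - of_real (coef (idx j)) * laurent_monomial x apex"

lemma laurent_monomial_axis: "laurent_monomial x (axis j 1) = x $ j"
proof -
  have "laurent_monomial x (axis j 1) = (\<Prod>i\<in>UNIV. if i = j then x $ i else 1)"
    unfolding laurent_monomial_def by (rule prod.cong) (auto simp: axis_def)
  then show ?thesis by simp
qed

lemma laurent_monomial_zero: "laurent_monomial x 0 = 1"
  by (simp add: laurent_monomial_def)

lemma laurent_eval_trinomial_coeff: "laurent_eval trinomial_coeff circuit j x = trinomial j x"
proof -
  have "(\<Sum>i\<in>UNIV. of_real (trinomial_coeff j (axis i 1)) * laurent_monomial x (axis i 1))
      = (\<Sum>i\<in>UNIV. if i = j then x $ i else 0)"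
    by (intro sum.cong) (simp_all add: trinomial_coeff_axis laurent_monomial_axis)
  then have "(\<Sum>i\<in>UNIV. of_real (trinomial_coeff j (axis i 1)) * laurent_monomial x (axis i 1)) = x $ j"
    by simp
  then show ?thesis
    by (simp add: laurent_eval_def sum_circuit trinomial_coeff_zero trinomial_coeff_apex
        laurent_monomial_zero trinomial_def)
qed

lemma laurent_eval_system_coeff:
  "laurent_eval system_coeff circuit j x = trinomial j x + (\<Sum>k\<in>UNIV. trinomial k x)"
  by (simp add: laurent_eval_def system_coeff_def distrib_right sum.distrib sum_distrib_right
      flip: laurent_eval_trinomial_coeff) (subst sum.swap, simp)

lemma system_zero_iff_trinomials_zero:
  "(\<forall>j. laurent_eval system_coeff circuit j x = 0) \<longleftrightarrow> (\<forall>j. trinomial j x = 0)"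
  unfolding laurent_eval_system_coeff by (rule all_add_sum_eq_0_iff)

definition factor :: "nat \<Rightarrow> 'a::real_field \<Rightarrow> 'a" where
  "factor k t = 1 + of_real (coef k) * t"

definition param :: "'a::real_field \<Rightarrow> 'a^'n" where
  "param t = (\<chi> i. factor (idx i) t)"

definition even_prod :: "'a::real_field \<Rightarrow> 'a" where
  "even_prod t = (\<Prod>k<CARD('n). if even k then factor k t ^ 2 else 1)"

definition odd_prod :: "'a::real_field \<Rightarrow> 'a" where
  "odd_prod t = (\<Prod>k<CARD('n). if even k then 1 else factor k t ^ 2)"

definition eliminant :: "'a::real_field \<Rightarrow> 'a" where
  "eliminant t = t * odd_prod t - even_prod t"

lemma inj_param: "inj (param :: 'a::real_field \<Rightarrow> 'a^'n)"
proof (rule injI)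
  fix s t :: 'a assume "param s = param t"
  moreover obtain i where "idx i = 0"
    using ex_idx_eq[of 0] by auto
  ultimately have "factor 0 s = factor 0 t"
    by (metis param_def vec_lambda_beta)
  then show "s = t"
    using coef_pos[of 0] by (simp add: factor_def)
qed

lemma laurent_monomial_param:
  assumes "\<forall>k<CARD('n). factor k t \<noteq> 0"
  shows "laurent_monomial (param t) apex = even_prod t / odd_prod t"
proof -
  have "laurent_monomial (param t) apex = (\<Prod>k<CARD('n). factor k t powi (if even k then 2 else -2))"
    unfolding laurent_monomial_def
    using prod_idx[of "\<lambda>k. factor k t powi (if even k then 2 else -2)"]
    by (simp add: param_def apex_def if_distrib[of "\<lambda>e. _ powi e"] cong: if_cong)
  also have "\<dots> = (\<Prod>k<CARD('n). (if even k then factor k t ^ 2 else 1) / (if even k then 1 else factor k t ^ 2))"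
    by (intro prod.cong) (simp_all add: power_int_minus divide_inverse)
  also have "\<dots> = even_prod t / odd_prod t"
    unfolding even_prod_def odd_prod_def by (rule prod_dividef)
  finally show ?thesis .
qed

lemma trinomials_zero_iff:
  fixes x :: "'a::real_field^'n"
  assumes "\<forall>i. x $ i \<noteq> 0"
  shows "(\<forall>j. trinomial j x = 0) \<longleftrightarrow>
    (\<exists>t. x = param t \<and> eliminant t = 0 \<and> (\<forall>k<CARD('n). factor k t \<noteq> 0))"
proof
  assume zero: "\<forall>j. trinomial j x = 0"
  define t where "t = laurent_monomial x apex"
  have x: "x = param t"
    using zero by (simp add: vec_eq_iff param_def factor_def trinomial_def t_def algebra_simps)
  have nonzero: "\<forall>k<CARD('n). factor k t \<noteq> 0"
    using assms ex_idx_eq x by (metis param_def vec_lambda_beta)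
  then have "odd_prod t \<noteq> 0"
    by (simp add: odd_prod_def)
  moreover have "t = laurent_monomial (param t) apex"
    unfolding x[symmetric] by (rule t_def)
  then have "t = even_prod t / odd_prod t"
    using laurent_monomial_param[OF nonzero] by simp
  ultimately have "eliminant t = 0"
    by (simp add: eliminant_def field_simps)
  then show "\<exists>t. x = param t \<and> eliminant t = 0 \<and> (\<forall>k<CARD('n). factor k t \<noteq> 0)"
    using x nonzero by blast
next
  assume "\<exists>t. x = param t \<and> eliminant t = 0 \<and> (\<forall>k<CARD('n). factor k t \<noteq> 0)"
  then obtain t where x: "x = param t" and "eliminant t = 0" and nonzero: "\<forall>k<CARD('n). factor k t \<noteq> 0"
    by blast
  then have "even_prod t = t * odd_prod t"
    by (simp add: eliminant_def)
  moreover have "odd_prod t \<noteq> 0"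
    using nonzero by (simp add: odd_prod_def)
  ultimately have "laurent_monomial x apex = t"
    using laurent_monomial_param[OF nonzero] x by simp
  then show "\<forall>j. trinomial j x = 0"
    using x by (simp add: trinomial_def param_def factor_def)
qed

lemma eliminant_zero: "eliminant 0 = -1"
  by (simp add: eliminant_def even_prod_def factor_def cong: if_cong)

lemma factor_of_real: "factor k (of_real t) = of_real (factor k t)"
  by (simp add: factor_def)

lemma eliminant_of_real: "eliminant (of_real t) = of_real (eliminant t)"
  by (simp add: eliminant_def even_prod_def odd_prod_def factor_def of_real_prod if_distrib
      cong: if_cong)

definition eliminant_poly :: "complex poly" where
  "eliminant_poly =
    [:0, 1:] * (\<Prod>k<CARD('n). if even k then 1 else [:1, of_real (coef k):] ^ 2)
      - (\<Prod>k<CARD('n). if even k then [:1, of_real (coef k):] ^ 2 else 1)"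

lemma poly_eliminant_poly: "poly eliminant_poly z = eliminant z"
  by (simp add: eliminant_poly_def eliminant_def even_prod_def odd_prod_def factor_def poly_prod
      if_distrib[of "\<lambda>p. poly p z"] algebra_simps cong: if_cong)

lemma eliminant_poly_nonzero: "eliminant_poly \<noteq> 0"
  using poly_eliminant_poly[of 0] by (auto simp: eliminant_zero)

lemma degree_eliminant_poly: "degree eliminant_poly \<le> CARD('n) + 1"
proof -
  have deg_factor: "degree ([:1, of_real (coef k):] ^ 2 :: complex poly) \<le> 2" for k
  proof -
    have "degree [:1, of_real (coef k) :: complex:] \<le> 1"
      by (simp add: degree_pCons_eq_if)
    then show ?thesis
      using degree_power_le[of "[:1, of_real (coef k) :: complex:]" 2] by linarith
  qed
  let ?odd = "\<Prod>k<CARD('n). if even k then 1 else [:1, of_real (coef k):] ^ 2 :: complex poly"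
  let ?even = "\<Prod>k<CARD('n). if even k then [:1, of_real (coef k):] ^ 2 else 1 :: complex poly"
  have "degree ?odd \<le> (\<Sum>k<CARD('n). if even k then 0 else 2)"
    by (rule degree_prod_le_sum) (simp add: deg_factor)
  also have "\<dots> \<le> CARD('n)"
    using sum_if_even_lessThan[where m="CARD('n)" and a="0::nat" and b=2] by simp
  finally have "degree ([:0, 1:] * ?odd) \<le> CARD('n) + 1"
    using degree_mult_le[of "[:0, 1:]" ?odd] by simp
  moreover have "degree ?even \<le> (\<Sum>k<CARD('n). if even k then 2 else 0)"
    by (rule degree_prod_le_sum) (simp add: deg_factor)
  moreover have "(\<Sum>k<CARD('n). if even k then 2 else 0) \<le> CARD('n) + 1"
    using sum_if_even_lessThan[where m="CARD('n)" and a=2 and b="0::nat"] by simp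
  ultimately show ?thesis
    unfolding eliminant_poly_def by (meson degree_diff_le order.trans)
qed

lemma factor_pos: "t > 0 \<Longrightarrow> factor k t > (0::real)"
  using coef_pos[of k] by (simp add: factor_def add_pos_nonneg)

lemma odd_prod_pos: "t > 0 \<Longrightarrow> odd_prod t > (0::real)"
  unfolding odd_prod_def by (intro prod_pos) (simp add: factor_pos order_less_imp_not_eq2)

lemma even_prod_pos: "t > 0 \<Longrightarrow> even_prod t > (0::real)"
  unfolding even_prod_def by (intro prod_pos) (simp add: factor_pos order_less_imp_not_eq2)

lemma ln_eliminant_ratio:
  fixes t :: real
  assumes "t > 0"
  shows "ln (t * odd_prod t) - ln (even_prod t) = ln t - 2 * (\<Sum>k<CARD('n). (-1) ^ k * ln (factor k t))"
proof -
  have pos: "0 < factor k t ^ 2" and nonzero: "factor k t \<noteq> 0" for k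
    using factor_pos[OF assms, of k] by simp_all
  have "ln (odd_prod t) = (\<Sum>k<CARD('n). if even k then 0 else 2 * ln (factor k t))"
    unfolding odd_prod_def using pos nonzero
    by (subst ln_prod) (auto intro!: sum.cong simp: ln_realpow)
  moreover have "ln (even_prod t) = (\<Sum>k<CARD('n). if even k then 2 * ln (factor k t) else 0)"
    unfolding even_prod_def using pos nonzero
    by (subst ln_prod) (auto intro!: sum.cong simp: ln_realpow)
  moreover have "(if even k then 0 else 2 * ln (factor k t)) - (if even k then 2 * ln (factor k t) else 0)
      = - 2 * ((-1) ^ k * ln (factor k t))" for k
    by simp
  ultimately show ?thesis
    using assms odd_prod_pos[OF assms] by (simp add: ln_mult sum_distrib_left sum_negf flip: sum_subtractf)
qed

lemma abs_ln_factor_at_node_le: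
  "\<bar>ln (factor k (base ^ (4 * j + 2))) - 4 * max 0 (real j - real k) * ln base\<bar> \<le> ln 2"
proof -
  define y where "y = coef k * base ^ (4 * j + 2)"
  have "y > 0"
    using coef_pos base_gt_1 by (simp add: y_def)
  have "ln y = 4 * (real j - real k) * ln base"
    using base_gt_1 by (simp add: y_def coef_def ln_mult ln_div ln_realpow algebra_simps)
  moreover have "0 < ln base"
    using base_gt_1 by simp
  ultimately have "max 0 (ln y) = 4 * max 0 (real j - real k) * ln base"
    by (cases "k \<le> j") (auto simp: max_def mult_le_0_iff zero_le_mult_iff)
  then show ?thesis
    using abs_ln_one_plus_minus_pos_part_le[OF \<open>y > 0\<close>] by (simp add: factor_def y_def)
qed

lemma ln_eliminant_ratio_at_node:
  assumes "j \<le> CARD('n)"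
  defines "t \<equiv> base ^ (4 * j + 2)"
  shows "\<bar>ln (t * odd_prod t) - ln (even_prod t) - 2 * (-1) ^ j * ln base\<bar> \<le> 2 * CARD('n) * ln 2"
proof -
  have "t > 0"
    using base_gt_1 by (simp add: t_def)
  \<comment> \<open>Replacing each ln (factor k t) by its dominant part gives exactly 2 (-1)^j ln base.\<close>
  have "ln t - 2 * (\<Sum>k<CARD('n). (-1) ^ k * (4 * max 0 (real j - real k) * ln base))
      = (real (2 * j + 1) - 4 * (\<Sum>k<j. (-1) ^ k * (real j - real k))) * 2 * ln base"
    using sum_lessThan_pos_part_diff[OF assms(1), of "\<lambda>k. (-1) ^ k"] ln_realpow[of base "4 * j + 2"]
    by (simp add: t_def sum_distrib_left sum_distrib_right algebra_simps flip: sum_distrib_left)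
  also have "\<dots> = 2 * (-1) ^ j * ln base"
    unfolding alternating_weighted_sum by simp
  finally have main: "ln t - 2 * (\<Sum>k<CARD('n). (-1) ^ k * (4 * max 0 (real j - real k) * ln base))
      = 2 * (-1) ^ j * ln base" .
  have "ln (t * odd_prod t) - ln (even_prod t) - 2 * (-1) ^ j * ln base
      = - 2 * (\<Sum>k<CARD('n). (-1) ^ k * (ln (factor k t) - 4 * max 0 (real j - real k) * ln base))"
    unfolding ln_eliminant_ratio[OF \<open>t > 0\<close>] main[symmetric]
    by (simp add: right_diff_distrib sum_subtractf)
  then have "\<bar>ln (t * odd_prod t) - ln (even_prod t) - 2 * (-1) ^ j * ln base\<bar>
      \<le> 2 * (\<Sum>k<CARD('n). \<bar>ln (factor k t) - 4 * max 0 (real j - real k) * ln base\<bar>)"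
    using sum_abs[of "\<lambda>k. (-1) ^ k * (ln (factor k t) - 4 * max 0 (real j - real k) * ln base)" "{..<CARD('n)}"]
    by (simp add: abs_mult)
  also have "\<dots> \<le> 2 * (\<Sum>k<CARD('n). ln 2)"
    using abs_ln_factor_at_node_le[of _ j] by (intro mult_left_mono sum_mono) (simp_all add: t_def)
  finally show ?thesis
    by simp
qed

lemma eliminant_sign_at_node:
  assumes "j \<le> CARD('n)"
  shows "(-1) ^ j * eliminant (base ^ (4 * j + 2) :: real) > 0"
proof -
  define t where "t = base ^ (4 * j + 2)"
  define D where "D = ln (t * odd_prod t) - ln (even_prod t)"
  have "t > 0"
    using base_gt_1 by (simp add: t_def)
  have "\<bar>D - 2 * (-1) ^ j * ln base\<bar> \<le> 2 * CARD('n) * ln 2"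
    unfolding D_def t_def by (rule ln_eliminant_ratio_at_node[OF assms])
  moreover have "ln base = (CARD('n) + 1) * ln 2"
    unfolding base_def by (rule ln_realpow)
  moreover have ln2: "0 < ln (2::real)"
    by simp
  ultimately have "(-1) ^ j * D > 0"
    by (cases "even j") (simp_all add: abs_le_iff algebra_simps, (insert ln2, linarith)+)
  then show ?thesis
    using \<open>t > 0\<close> odd_prod_pos[of t] even_prod_pos[of t]
    by (cases "even j") (auto simp: D_def eliminant_def t_def ln_mult ln_less_cancel_iff
        simp flip: ln_mult)
qed

lemma continuous_on_eliminant: "continuous_on UNIV (eliminant :: real \<Rightarrow> real)"
proof -
  have "continuous_on UNIV (\<lambda>t::real. if even k then factor k t ^ 2 else 1)"
    "continuous_on UNIV (\<lambda>t::real. if even k then 1 else factor k t ^ 2)" for k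
    by (cases "even k"; auto simp: factor_def intro!: continuous_intros)+
  then show ?thesis
    unfolding eliminant_def even_prod_def odd_prod_def by (intro continuous_intros)
qed

definition node :: "nat \<Rightarrow> real" where
  "node j = (case j of 0 \<Rightarrow> 0 | Suc i \<Rightarrow> base ^ (4 * i + 2))"

lemma strict_mono_node: "strict_mono node"
proof (rule strict_monoI_Suc)
  fix j
  have "base ^ (4 * i + 2) < base ^ (4 * Suc i + 2)" for i
    using base_gt_1 by (intro power_strict_increasing) auto
  then show "node j < node (Suc j)"
    using base_gt_1 by (cases j) (simp_all add: node_def)
qed

lemma eliminant_sign_change_at_node:
  assumes "j \<le> CARD('n)"
  shows "eliminant (node j) * eliminant (node (Suc j)) < 0"
proof (cases j)
  case 0
  then show ?thesis
    using eliminant_sign_at_node[of 0] by (simp add: node_def eliminant_zero)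
next
  case (Suc i)
  have "0 < (-1) ^ i * eliminant (node j)" "0 < (-1) ^ j * eliminant (node (Suc j))"
    using eliminant_sign_at_node[of i] eliminant_sign_at_node[of j] assms Suc
    by (simp_all add: node_def)
  then have "0 < ((-1) ^ i * eliminant (node j)) * ((-1) ^ j * eliminant (node (Suc j)))"
    by (rule mult_pos_pos)
  also have "\<dots> = ((-1) ^ i * (-1) ^ j) * (eliminant (node j) * eliminant (node (Suc j)))"
    by (simp only: mult_ac)
  also have "(-1) ^ i * (-1) ^ j = (-1::real)"
    using Suc by (simp add: minus_one_mult_self)
  finally show ?thesis
    by simp
qed

lemma positive_roots_eliminant:
  obtains R :: "real set"
  where "finite R" "card R = CARD('n) + 1" "\<And>t. t \<in> R \<Longrightarrow> t > 0 \<and> eliminant t = 0"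
proof -
  have "eliminant (node j) * eliminant (node (Suc j)) < 0" if "j < CARD('n) + 1" for j
    using that by (intro eliminant_sign_change_at_node) simp
  then obtain R where "finite R" "card R = CARD('n) + 1" "\<And>t. t \<in> R \<Longrightarrow> node 0 < t \<and> eliminant t = 0"
    using zeros_from_sign_changes[OF continuous_on_eliminant strict_mono_node] by blast
  then show ?thesis
    by (intro that) (simp_all add: node_def)
qed

lemma complex_roots_eliminant:
  assumes "finite R" "card R = CARD('n) + 1" "\<And>t. t \<in> R \<Longrightarrow> eliminant t = 0"
  shows "{z::complex. eliminant z = 0} = of_real ` R"
proof -
  let ?Z = "{z. poly eliminant_poly z = 0}"
  have "finite ?Z" "card ?Z \<le> CARD('n) + 1"
    using poly_roots_finite card_poly_roots_bound degree_eliminant_poly eliminant_poly_nonzero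
    by (blast, fastforce)
  moreover have "of_real ` R \<subseteq> ?Z"
    using assms(3) by (auto simp: poly_eliminant_poly eliminant_of_real)
  moreover have "card (of_real ` R :: complex set) = CARD('n) + 1"
    using assms(2) by (simp add: card_image inj_on_def)
  ultimately have "?Z = of_real ` R"
    by (metis card_seteq)
  then show ?thesis
    by (simp add: poly_eliminant_poly)
qed

lemma torus_solution_iff:
  fixes x :: "'a::real_field^'n"
  shows "(\<forall>i. x $ i \<noteq> 0) \<and> (\<forall>j. laurent_eval system_coeff circuit j x = 0) \<longleftrightarrow>
    (\<exists>t. x = param t \<and> eliminant t = 0 \<and> (\<forall>k<CARD('n). factor k t \<noteq> 0))"
proof -
  have "idx i < CARD('n)" for i
    using bij_idx by (auto simp: bij_betw_def)
  then have "(\<forall>i. param t $ i \<noteq> 0)" if "\<forall>k<CARD('n). factor k t \<noteq> (0::'a)" for t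
    using that by (simp add: param_def)
  then show ?thesis
    using trinomials_zero_iff system_zero_iff_trinomials_zero by metis
qed

lemma complex_torus_solutions_eq:
  assumes roots: "{z::complex. eliminant z = 0} = of_real ` R" and pos: "\<forall>t\<in>R. t > 0"
  shows "complex_torus_solutions system_coeff circuit = param ` of_real ` R"
proof
  show "complex_torus_solutions system_coeff circuit \<subseteq> param ` of_real ` R"
    using roots by (force simp: complex_torus_solutions_def torus_solution_iff)
  have "factor k (of_real t :: complex) \<noteq> 0" if "t \<in> R" for k t
    using factor_pos[of t k] pos that by (simp add: factor_of_real)
  then show "param ` of_real ` R \<subseteq> complex_torus_solutions system_coeff circuit"
    using roots by (force simp: complex_torus_solutions_def torus_solution_iff simp del: of_real_eq_0_iff)
qed

lemma positive_solutions_eq: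
  assumes roots: "{t::real. eliminant t = 0} = R" and pos: "\<forall>t\<in>R. t > 0"
  shows "positive_solutions system_coeff circuit = param ` R"
proof
  show "positive_solutions system_coeff circuit \<subseteq> param ` R"
  proof
    fix x assume "x \<in> positive_solutions system_coeff circuit"
    then have "\<forall>i. x $ i \<noteq> 0" "\<forall>j. laurent_eval system_coeff circuit j x = 0"
      by (auto simp: positive_solutions_def less_imp_neq[symmetric])
    then obtain t where "x = param t" "eliminant t = 0"
      using torus_solution_iff by blast
    then show "x \<in> param ` R"
      using roots by blast
  qed
  show "param ` R \<subseteq> positive_solutions system_coeff circuit"
  proof
    fix x assume "x \<in> param ` R"
    then obtain t where t: "t \<in> R" "x = param t"
      by blast
    then have "\<forall>k. factor k t > 0"
      using pos factor_pos by blast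
    moreover have "eliminant t = 0"
      using roots t(1) by blast
    ultimately have "\<forall>j. laurent_eval system_coeff circuit j x = 0"
      using torus_solution_iff[of x] t(2) by (metis less_irrefl)
    then show "x \<in> positive_solutions system_coeff circuit"
      using \<open>\<forall>k. factor k t > 0\<close> t(2) by (simp add: positive_solutions_def param_def)
  qed
qed

lemma card_solutions:
  "finite (complex_torus_solutions system_coeff circuit)
    \<and> card (complex_torus_solutions system_coeff circuit) = CARD('n) + 1
    \<and> card (positive_solutions system_coeff circuit) = CARD('n) + 1"
proof -
  obtain R :: "real set" where R: "finite R" "card R = CARD('n) + 1" "\<And>t. t \<in> R \<Longrightarrow> t > 0 \<and> eliminant t = 0"
    using positive_roots_eliminant by blast
  have complex_roots: "{z::complex. eliminant z = 0} = of_real ` R"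
    using R by (intro complex_roots_eliminant) auto
  have "{t::real. eliminant t = 0} = R"
    using arg_cong[OF complex_roots, of "\<lambda>Z. of_real -` Z"]
    by (simp add: eliminant_of_real vimage_def inj_image_mem_iff[OF inj_of_real])
  then have "card (positive_solutions system_coeff circuit) = card R"
    using R(3) inj_param[where 'a=real] by (simp add: positive_solutions_eq card_image inj_on_subset)
  moreover have "card (complex_torus_solutions system_coeff circuit) = card R"
    using complex_roots R(3) inj_param[where 'a=complex]
    by (simp add: complex_torus_solutions_eq card_image inj_on_subset inj_on_def)
  moreover have "finite (complex_torus_solutions system_coeff circuit)"
    using complex_roots R by (simp add: complex_torus_solutions_eq)
  ultimately show ?thesis
    using R(2) by simp
qed

end

theorem proposition3p4:
  "\<exists>(C :: (int ^ 'n::finite) set) (c :: 'n \<Rightarrow> int ^ 'n \<Rightarrow> real).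
     nondegenerate_circuit C \<and> supported_on c C \<and> generic_system c C \<and>
     card (positive_solutions c C) = CARD('n) + 1"
proof -
  obtain idx :: "'n \<Rightarrow> nat" where "bij_betw idx UNIV {..<CARD('n)}"
    using ex_bij_betw_finite_nat[of "UNIV :: 'n set"] by (auto simp: atLeast0LessThan)
  then interpret coordinate_enumeration idx
    by unfold_locales
  have "generic_system system_coeff circuit"
    using card_solutions normalized_volume_circuit by (simp add: generic_system_def)
  then show ?thesis
    using nondegenerate_circuit_circuit supported_on_system_coeff card_solutions by blast
qed

end
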